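(* Let $\kappa$ be an uncountable regular cardinal. There is no consonant joint diamond sequence of length $\kappa$ for $\kappa$.
   Context: A filter on $\kappa$ is normal if closed under diagonal intersections and uniform if it contains all cobounded sets. A $\kappa$-list is $d\colon\kappa\to\mathcal{P}(\kappa)$ with $d(\alpha)\subseteq\alpha$. A joint diamond sequence of length $\lambda$ for $\kappa$ is a sequence $\langle d_\alpha;\alpha<\lambda\rangle$ of $\kappa$-lists such that for every sequence $\langle a_\alpha;\alpha<\lambda\rangle$ of subsets of $\kappa$ there is a proper normal uniform filter $\mathcal{F}$ on $\kappa$ with $S_\alpha=\{\xi<\kappa: d_\alpha(\xi)=a_\alpha\cap\xi\}\in\mathcal{F}$ for all $\alpha$. Such a sequence is consonant if for every sequence of targets $\langle a_\alpha;\alpha<\lambda\rangle$ there is a stationary $S\subseteq\kappa$ with $S\subseteq S_\alpha$ for all $\alpha<\lambda$. *)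

theory Defs
  imports Main "HOL-Library.Equipollence" "HOL-Library.Countable_Set"
begin

text \<open>The cardinal kappa is represented by the universe of a well-ordered type 'k
 (an initial ordinal: every proper initial segment has strictly smaller cardinality).
 Ordinals below kappa are elements of 'k; subsets of kappa are 'k set.\<close>

definition initial_ordinal_type :: "'k::wellorder itself \<Rightarrow> bool" where
  "initial_ordinal_type _ \<longleftrightarrow> (\<forall>x::'k. {..<x} \<prec> (UNIV::'k set))"

definition regular_type :: "'k::wellorder itself \<Rightarrow> bool" where
  "regular_type _ \<longleftrightarrow>
     (\<forall>X::'k set. (\<forall>a. \<exists>x\<in>X. a \<le> x) \<longrightarrow> X \<approx> (UNIV::'k set))"

definition cobounded :: "'k::wellorder set \<Rightarrow> bool" where
  "cobounded X \<longleftrightarrow> (\<exists>\<beta>. {\<beta>..} \<subseteq> X)"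

definition proper_filter :: "'k set set \<Rightarrow> bool" where
  "proper_filter F \<longleftrightarrow> UNIV \<in> F \<and> {} \<notin> F \<and>
     (\<forall>X Y. X \<in> F \<longrightarrow> X \<subseteq> Y \<longrightarrow> Y \<in> F) \<and>
     (\<forall>X Y. X \<in> F \<longrightarrow> Y \<in> F \<longrightarrow> X \<inter> Y \<in> F)"

definition diag_inter :: "('k::wellorder \<Rightarrow> 'k set) \<Rightarrow> 'k set" where
  "diag_inter X = {\<xi>. \<forall>\<alpha><\<xi>. \<xi> \<in> X \<alpha>}"

definition normal_filter :: "'k::wellorder set set \<Rightarrow> bool" where
  "normal_filter F \<longleftrightarrow> (\<forall>X. (\<forall>\<alpha>. X \<alpha> \<in> F) \<longrightarrow> diag_inter X \<in> F)"

definition uniform_filter :: "'k::wellorder set set \<Rightarrow> bool" where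
  "uniform_filter F \<longleftrightarrow> (\<forall>X. cobounded X \<longrightarrow> X \<in> F)"

definition unbounded :: "'k::wellorder set \<Rightarrow> bool" where
  "unbounded C \<longleftrightarrow> (\<forall>\<alpha>. \<exists>c\<in>C. \<alpha> \<le> c)"

definition closed_set :: "'k::wellorder set \<Rightarrow> bool" where
  "closed_set C \<longleftrightarrow> (\<forall>\<gamma>. C \<inter> {..<\<gamma>} \<noteq> {} \<and> (\<forall>\<beta><\<gamma>. \<exists>c\<in>C. \<beta> < c \<and> c < \<gamma>)
                        \<longrightarrow> \<gamma> \<in> C)"

definition club :: "'k::wellorder set \<Rightarrow> bool" where
  "club C \<longleftrightarrow> closed_set C \<and> unbounded C"

definition stationary :: "'k::wellorder set \<Rightarrow> bool" where
  "stationary S \<longleftrightarrow> (\<forall>C. club C \<longrightarrow> S \<inter> C \<noteq> {})"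

definition kappa_list :: "('k::wellorder \<Rightarrow> 'k set) \<Rightarrow> bool" where
  "kappa_list d \<longleftrightarrow> (\<forall>\<xi>. d \<xi> \<subseteq> {..<\<xi>})"

definition guess_set :: "('k::wellorder \<Rightarrow> 'k set) \<Rightarrow> 'k set \<Rightarrow> 'k set" where
  "guess_set d a = {\<xi>. d \<xi> = a \<inter> {..<\<xi>}}"

definition joint_diamond :: "('k::wellorder \<Rightarrow> 'k \<Rightarrow> 'k set) \<Rightarrow> bool" where
  "joint_diamond D \<longleftrightarrow> (\<forall>\<alpha>. kappa_list (D \<alpha>)) \<and>
     (\<forall>A::'k \<Rightarrow> 'k set. \<exists>F. proper_filter F \<and> normal_filter F \<and> uniform_filter F \<and>
        (\<forall>\<alpha>. guess_set (D \<alpha>) (A \<alpha>) \<in> F))"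

definition consonant :: "('k::wellorder \<Rightarrow> 'k \<Rightarrow> 'k set) \<Rightarrow> bool" where
  "consonant D \<longleftrightarrow> (\<forall>A::'k \<Rightarrow> 'k set. \<exists>S. stationary S \<and> (\<forall>\<alpha>. S \<subseteq> guess_set (D \<alpha>) (A \<alpha>)))"

end

theory Submission
  imports Defs
begin

text \<open>Diagonalise against the sequence: choose the \<alpha>-th target so that the \<alpha>-th list
  guesses it wrongly at \<alpha> itself. Then every point of a set contained in all the guessing
  sets lies at or below a fixed z, whereas a stationary set meets the club of points above z.\<close>

lemma diagonal_targets_defeat_guesses:
  fixes D :: "'k::wellorder \<Rightarrow> 'k \<Rightarrow> 'k set" and z :: 'k
  obtains A where "\<And>\<xi>. z < \<xi> \<Longrightarrow> \<xi> \<notin> guess_set (D \<xi>) (A \<xi>)"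
proof
  fix \<xi> :: 'k
  assume "z < \<xi>"
  then show "\<xi> \<notin> guess_set (D \<xi>) (if z \<in> D \<xi> \<xi> then {} else {z})"
    unfolding guess_set_def by auto
qed

lemma club_greaterThan:
  fixes z :: "'k::wellorder"
  assumes "z < w"
  shows "club {z<..}"
  unfolding club_def closed_set_def unbounded_def
proof (intro conjI allI impI)
  fix \<gamma> :: 'k
  assume "{z<..} \<inter> {..<\<gamma>} \<noteq> {} \<and> (\<forall>\<beta><\<gamma>. \<exists>c\<in>{z<..}. \<beta> < c \<and> c < \<gamma>)"
  then show "\<gamma> \<in> {z<..}" by auto
next
  fix \<alpha> :: 'k
  show "\<exists>c\<in>{z<..}. \<alpha> \<le> c"
    using assms by (cases "z < \<alpha>") (auto intro: bexI[of _ w])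
qed

lemma stationary_not_subset_atMost:
  fixes z :: "'k::wellorder"
  assumes "stationary S" and "z < w"
  shows "\<not> S \<subseteq> {..z}"
proof
  assume "S \<subseteq> {..z}"
  moreover have "S \<inter> {z<..} \<noteq> {}"
    using assms club_greaterThan unfolding stationary_def by blast
  ultimately show False by auto
qed

lemma not_consonant:
  fixes D :: "'k::wellorder \<Rightarrow> 'k \<Rightarrow> 'k set" and z :: 'k
  assumes "z < w"
  shows "\<not> consonant D"
proof
  assume "consonant D"
  obtain A where wrong: "\<And>\<xi>. z < \<xi> \<Longrightarrow> \<xi> \<notin> guess_set (D \<xi>) (A \<xi>)"
    using diagonal_targets_defeat_guesses[of z D] by blast
  obtain S where "stationary S" and guessed: "\<And>\<alpha>. S \<subseteq> guess_set (D \<alpha>) (A \<alpha>)"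
    using \<open>consonant D\<close> unfolding consonant_def by blast
  have "S \<subseteq> {..z}"
    using guessed wrong by (fastforce simp: not_less)
  with \<open>stationary S\<close> \<open>z < w\<close> show False
    using stationary_not_subset_atMost by blast
qed

theorem proposition5p2:
  assumes "initial_ordinal_type TYPE('k::wellorder)"
    and "\<not> countable (UNIV :: 'k set)"
    and "regular_type TYPE('k)"
  shows "\<not> (\<exists>D :: 'k \<Rightarrow> 'k \<Rightarrow> 'k set. joint_diamond D \<and> consonant D)"
proof -
  obtain x y :: 'k where "x \<noteq> y"
    using assms(2) by (metis countable_empty countable_insert insertI1 subsetI
        countable_subset UNIV_I insertE)
  then obtain z w :: 'k where "z < w"
    by (metis neq_iff)
  then show ?thesis
    using not_consonant by blast
qed

end
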